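(* For every integer $k$ with $7\le k\le 17$, the Tuza constant satisfies $c_k \ge \dfrac{3}{2k+6}$.
   Context: A hypergraph $H=(V,E)$ consists of a finite vertex set $V$ and a finite collection $E$ of subsets of $V$ (edges). $H$ is $k$-uniform if every edge has exactly $k$ vertices. A transversal of $H$ is a set $T\subseteq V$ meeting every edge; $\tau(H)$ denotes the minimum size of a transversal. For $k\ge 1$, the Tuza constant is $c_k=\sup_{H} \tau(H)/(m+n)$, where the supremum ranges over all $k$-uniform hypergraphs $H$, with $n=|V|$ and $m=|E|$. *)

theory Defs
  imports "HOL-Analysis.Analysis" "HOL-Library.Multiset"
begin

text \<open>A hypergraph: a finite vertex set V and a finite collection (multiset) E of
  subsets of V. Vertices are taken from nat (every finite hypergraph is isomorphic
  to one with vertices in nat).\<close>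

definition uniform_hypergraph :: "nat \<Rightarrow> nat set \<Rightarrow> nat set multiset \<Rightarrow> bool" where
  "uniform_hypergraph k V E \<longleftrightarrow> finite V \<and> (\<forall>e \<in># E. e \<subseteq> V \<and> card e = k)"

definition is_transversal :: "nat set \<Rightarrow> nat set multiset \<Rightarrow> nat set \<Rightarrow> bool" where
  "is_transversal V E T \<longleftrightarrow> T \<subseteq> V \<and> (\<forall>e \<in># E. T \<inter> e \<noteq> {})"

definition tau :: "nat set \<Rightarrow> nat set multiset \<Rightarrow> nat" where
  "tau V E = Min {card T | T. is_transversal V E T}"

definition tuza_constant :: "nat \<Rightarrow> real" where
  "tuza_constant k = Sup {real (tau V E) / real (size E + card V) | V E. uniform_hypergraph k V E}"

end

theory Submission
  imports Defs
begin

text \<open>If any two vertices of a hypergraph avoid a common edge, no set of at most two vertices is a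
  transversal, so \<open>\<tau> \<ge> 3\<close> and \<open>c\<^sub>k \<ge> 3 / (m + n)\<close>. Label every vertex by the set of edges that
  do not contain it: the condition says that labels pairwise intersect, which holds when every
  label contains a line of the Fano plane on seven edges. For \<open>7 \<le> k \<le> 17\<close> such labels can be
  chosen so that every edge has exactly \<open>k\<close> vertices and there are at most \<open>2k - 1\<close> vertices, giving
  \<open>c\<^sub>k \<ge> 3 / (7 + 2k - 1)\<close>.\<close>

lemma finite_transversal_cards:
  assumes "finite V"
  shows "finite {card T | T. is_transversal V E T}"
proof -
  have "{card T | T. is_transversal V E T} \<subseteq> card ` Pow V"
    unfolding is_transversal_def by auto
  then show ?thesis
    using assms finite_surj by blast
qed

lemma tau_le_card:
  assumes "finite V" and "is_transversal V E T"
  shows "tau V E \<le> card T"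
  unfolding tau_def using finite_transversal_cards[OF assms(1)] assms(2) by (auto intro: Min_le)

lemma tau_geI:
  assumes "finite V" and "is_transversal V E T\<^sub>0"
    and "\<And>T. is_transversal V E T \<Longrightarrow> t \<le> card T"
  shows "t \<le> tau V E"
  unfolding tau_def using finite_transversal_cards[OF assms(1)] assms(2,3)
  by (subst Min_ge_iff) auto

lemma uniform_hypergraph_vertices_transversal:
  assumes "uniform_hypergraph k V E" and "1 \<le> k"
  shows "is_transversal V E V"
  unfolding is_transversal_def
proof (intro conjI ballI)
  fix e
  assume "e \<in># E"
  then have "e \<subseteq> V" and "card e = k"
    using assms(1) unfolding uniform_hypergraph_def by auto
  then have "e \<noteq> {}"
    using assms(2) by auto
  with \<open>e \<subseteq> V\<close> show "V \<inter> e \<noteq> {}"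
    by blast
qed simp

lemma tau_ratio_le_tuza_constant:
  assumes "uniform_hypergraph k V E" and "1 \<le> k"
  shows "real (tau V E) / real (size E + card V) \<le> tuza_constant k"
proof -
  have "bdd_above {real (tau V E) / real (size E + card V) | V E. uniform_hypergraph k V E}"
  proof (rule bdd_aboveI)
    fix r
    assume "r \<in> {real (tau V E) / real (size E + card V) | V E. uniform_hypergraph k V E}"
    then obtain V E where r: "r = real (tau V E) / real (size E + card V)"
      and u: "uniform_hypergraph k V E"
      by blast
    have "tau V E \<le> card V"
      using u uniform_hypergraph_vertices_transversal[OF u assms(2)]
      by (auto simp: uniform_hypergraph_def intro: tau_le_card)
    then show "r \<le> 1"
      unfolding r by (simp add: divide_le_eq_1 order_less_le)
  qed
  then show ?thesis
    unfolding tuza_constant_def using assms(1) by (intro cSup_upper) blast+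
qed

lemma finite_card_le_2_doubleton:
  assumes "finite T" and "T \<noteq> {}" and "card T \<le> 2"
  obtains x y where "T = {x, y}"
proof -
  have "card T \<noteq> 0"
    using assms(1,2) by simp
  then consider "card T = 1" | "card T = 2"
    using assms(3) by linarith
  then show ?thesis
  proof cases
    case 1
    then obtain x where "T = {x}"
      by (auto simp: card_1_singleton_iff)
    then show ?thesis
      using that[of x x] by simp
  next
    case 2
    then show ?thesis
      using that by (auto simp: card_2_iff)
  qed
qed

lemma card_transversal_ge_3:
  assumes "finite V" and "E \<noteq> {#}"
    and avoid: "\<And>x y. x \<in> V \<Longrightarrow> y \<in> V \<Longrightarrow> \<exists>e\<in>#E. x \<notin> e \<and> y \<notin> e"
    and T: "is_transversal V E T"
  shows "3 \<le> card T"
proof (rule ccontr)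
  assume "\<not> 3 \<le> card T"
  then have "card T \<le> 2"
    by linarith
  have "T \<subseteq> V" and hits: "\<And>e. e \<in># E \<Longrightarrow> T \<inter> e \<noteq> {}"
    using T unfolding is_transversal_def by auto
  have "finite T"
    using assms(1) \<open>T \<subseteq> V\<close> by (rule finite_subset[rotated])
  moreover have "T \<noteq> {}"
    using assms(2) hits by (metis Int_empty_left multiset_nonemptyE)
  ultimately obtain x y where xy: "T = {x, y}"
    using \<open>card T \<le> 2\<close> by (rule finite_card_le_2_doubleton)
  then obtain e where "e \<in># E" and "x \<notin> e" and "y \<notin> e"
    using avoid \<open>T \<subseteq> V\<close> by blast
  then show False
    using hits xy by blast
qed

definition label_edge :: "nat list list \<Rightarrow> nat \<Rightarrow> nat set" where
  "label_edge ts j = {x. x < length ts \<and> j \<notin> set (ts ! x)}"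

definition labels_regular :: "nat \<Rightarrow> nat \<Rightarrow> nat list list \<Rightarrow> bool" where
  "labels_regular k m ts \<longleftrightarrow> (\<forall>j<m. length (filter (\<lambda>t. j \<notin> set t) ts) = k)"

lemma uniform_label_hypergraph:
  assumes "labels_regular k m ts"
  shows "uniform_hypergraph k {..<length ts} (mset (map (label_edge ts) [0..<m]))"
proof -
  have "label_edge ts j \<subseteq> {..<length ts}"
    and "card (label_edge ts j) = length (filter (\<lambda>t. j \<notin> set t) ts)" for j
    by (auto simp: label_edge_def length_filter_conv_card)
  then show ?thesis
    using assms unfolding uniform_hypergraph_def labels_regular_def by auto
qed

lemma tuza_constant_ge_intersecting_labels:
  assumes "labels_regular k m ts"
    and intersecting: "\<forall>t\<in>set ts. \<forall>t'\<in>set ts. \<exists>j<m. j \<in> set t \<and> j \<in> set t'"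
    and "0 < m" and "1 \<le> k"
  shows "3 / real (m + length ts) \<le> tuza_constant k"
proof -
  define V where "V = {..<length ts}"
  define E where "E = mset (map (label_edge ts) [0..<m])"
  have uniform: "uniform_hypergraph k V E"
    unfolding V_def E_def using assms(1) by (rule uniform_label_hypergraph)
  have avoid: "\<exists>e\<in>#E. x \<notin> e \<and> y \<notin> e" if "x \<in> V" and "y \<in> V" for x y
  proof -
    have "ts ! x \<in> set ts" and "ts ! y \<in> set ts"
      using that by (simp_all add: V_def)
    then obtain j where "j < m" and "j \<in> set (ts ! x)" and "j \<in> set (ts ! y)"
      using intersecting by blast
    then show ?thesis
      unfolding E_def label_edge_def by force
  qed
  have "label_edge ts 0 \<in># E"
    using assms(3) by (simp add: E_def)
  then have "E \<noteq> {#}"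
    by auto
  have "3 \<le> tau V E"
  proof (rule tau_geI)
    show "finite V" and "is_transversal V E V"
      using uniform_hypergraph_vertices_transversal[OF uniform assms(4)] by (simp_all add: V_def)
    show "3 \<le> card T" if "is_transversal V E T" for T
      using card_transversal_ge_3[OF _ \<open>E \<noteq> {#}\<close> avoid that] by (simp add: V_def)
  qed
  moreover have "size E + card V = m + length ts"
    by (simp add: V_def E_def)
  ultimately have "3 / real (m + length ts) \<le> real (tau V E) / real (size E + card V)"
    by (simp add: divide_right_mono)
  also have "\<dots> \<le> tuza_constant k"
    using uniform assms(4) by (rule tau_ratio_le_tuza_constant)
  finally show ?thesis .
qed

definition fano_lines :: "nat list list" where
  "fano_lines = [[0,1,2], [0,3,4], [0,5,6], [1,3,5], [1,4,6], [2,3,6], [2,4,5]]"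

lemma fano_lines_intersect:
  "\<forall>l\<in>set fano_lines. \<forall>l'\<in>set fano_lines. \<exists>j<7. j \<in> set l \<and> j \<in> set l'"
  unfolding fano_lines_def by code_simp

lemma containing_fano_lines_intersect:
  assumes "\<forall>t\<in>set ts. \<exists>l\<in>set fano_lines. set l \<subseteq> set t"
  shows "\<forall>t\<in>set ts. \<forall>t'\<in>set ts. \<exists>j<7. j \<in> set t \<and> j \<in> set t'"
  using assms fano_lines_intersect by blast

definition fano_labelling :: "nat \<Rightarrow> nat list list" where
  "fano_labelling k =
    [[[0,1,2,3], [0,1,2,4], [0,1,3,5], [0,3,4], [0,5,6], [0,5,6], [1,3,5], [1,4,6], [1,4,6],
      [2,3,6], [2,3,6], [2,4,5], [2,4,5]],
     [[0,1,2], [0,1,2], [0,3,4], [0,3,4], [0,5,6], [0,5,6], [1,3,5], [1,3,5], [1,4,6], [1,4,6],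
      [2,3,6], [2,3,6], [2,4,5], [2,4,5]],
     [[0,1,2,3], [0,1,2,3], [0,1,2,3], [0,1,3,4], [0,3,4,5], [0,5,6], [0,5,6], [0,5,6], [1,3,5],
      [1,4,6], [1,4,6], [1,4,6], [2,3,6], [2,3,6], [2,4,5], [2,4,5], [2,4,5]],
     [[0,1,2,3], [0,1,2,3], [0,1,2], [0,3,4], [0,3,4], [0,5,6], [0,5,6], [0,5,6], [1,3,5], [1,3,5],
      [1,4,6], [1,4,6], [1,4,6], [2,3,6], [2,3,6], [2,4,5], [2,4,5], [2,4,5]],
     [[0,1,2,3], [0,1,2,4], [0,1,3,5], [0,1,2], [0,3,4], [0,3,4], [0,5,6], [0,5,6], [0,5,6],
      [1,3,5], [1,3,5], [1,4,6], [1,4,6], [1,4,6], [2,3,6], [2,3,6], [2,3,6], [2,4,5], [2,4,5],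
      [2,4,5]],
     [[0,1,2], [0,1,2], [0,1,2], [0,3,4], [0,3,4], [0,3,4], [0,5,6], [0,5,6], [0,5,6], [1,3,5],
      [1,3,5], [1,3,5], [1,4,6], [1,4,6], [1,4,6], [2,3,6], [2,3,6], [2,3,6], [2,4,5], [2,4,5],
      [2,4,5]],
     [[0,1,2,3], [0,1,2,3], [0,1,2,3], [0,1,2,4], [0,1,3,5], [0,3,4], [0,3,4], [0,5,6], [0,5,6],
      [0,5,6], [0,5,6], [1,3,5], [1,3,5], [1,4,6], [1,4,6], [1,4,6], [1,4,6], [2,3,6], [2,3,6],
      [2,3,6], [2,4,5], [2,4,5], [2,4,5], [2,4,5]],
     [[0,1,2,3], [0,1,2,3], [0,1,2], [0,1,2], [0,3,4], [0,3,4], [0,3,4], [0,5,6], [0,5,6],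
      [0,5,6], [0,5,6], [1,3,5], [1,3,5], [1,3,5], [1,4,6], [1,4,6], [1,4,6], [1,4,6], [2,3,6],
      [2,3,6], [2,3,6], [2,4,5], [2,4,5], [2,4,5], [2,4,5]],
     [[0,1,2,3], [0,1,2,4], [0,1,3,5], [0,1,2], [0,1,2], [0,3,4], [0,3,4], [0,3,4], [0,5,6],
      [0,5,6], [0,5,6], [0,5,6], [1,3,5], [1,3,5], [1,3,5], [1,4,6], [1,4,6], [1,4,6], [1,4,6],
      [2,3,6], [2,3,6], [2,3,6], [2,3,6], [2,4,5], [2,4,5], [2,4,5], [2,4,5]],
     [[0,1,2], [0,1,2], [0,1,2], [0,1,2], [0,3,4], [0,3,4], [0,3,4], [0,3,4], [0,5,6], [0,5,6],
      [0,5,6], [0,5,6], [1,3,5], [1,3,5], [1,3,5], [1,3,5], [1,4,6], [1,4,6], [1,4,6], [1,4,6],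
      [2,3,6], [2,3,6], [2,3,6], [2,3,6], [2,4,5], [2,4,5], [2,4,5], [2,4,5]],
     [[0,1,2,3], [0,1,2,3], [0,1,2,3], [0,1,2,4], [0,1,3,5], [0,1,2], [0,3,4], [0,3,4], [0,3,4],
      [0,5,6], [0,5,6], [0,5,6], [0,5,6], [0,5,6], [1,3,5], [1,3,5], [1,3,5], [1,4,6], [1,4,6],
      [1,4,6], [1,4,6], [1,4,6], [2,3,6], [2,3,6], [2,3,6], [2,3,6], [2,4,5], [2,4,5], [2,4,5],
      [2,4,5], [2,4,5]]] ! (k - 7)"

lemma fano_labelling_valid:
  "\<forall>k\<in>{7..17}. labels_regular k 7 (fano_labelling k)
     \<and> (\<forall>t\<in>set (fano_labelling k). \<exists>l\<in>set fano_lines. set l \<subseteq> set t)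
     \<and> length (fano_labelling k) < 2 * k"
  unfolding labels_regular_def fano_lines_def by code_simp

theorem theorem1:
  fixes k :: nat
  assumes "7 \<le> k" and "k \<le> 17"
  shows "tuza_constant k \<ge> 3 / (2 * real k + 6)"
proof -
  let ?ts = "fano_labelling k"
  have valid: "labels_regular k 7 ?ts" "\<forall>t\<in>set ?ts. \<exists>l\<in>set fano_lines. set l \<subseteq> set t"
    "length ?ts < 2 * k"
    using fano_labelling_valid assms by auto
  have "3 / (2 * real k + 6) \<le> 3 / real (7 + length ?ts)"
    using valid(3) by (intro divide_left_mono) auto
  also have "\<dots> \<le> tuza_constant k"
    using valid(1) containing_fano_lines_intersect[OF valid(2)] assms(1)
    by (intro tuza_constant_ge_intersecting_labels) auto
  finally show ?thesis .
qed

end
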